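(* Let $V$ be a real vector space of finite even dimension $n>2$ with a quadratic form $Q$ of anti-Lorentz signature $(1,n-1)$, and let $\rho$ be a $c$-compatible irreducible representation of $\mathbb{C}l(V)$ on a finite-dimensional complex vector space $K$ with nondegenerate hermitian form $(\cdot,\cdot)$, with chirality operator $\chi$. Let $u,v\in V$. Then the operator $\rho(u)+\chi\rho(v)$ is Krein-positive iff $u+v$ and $u-v$ are both timelike and future-directed.
   Context: $Cl(V,Q)$ is the real Clifford algebra with $v^2=+Q(v)$, $\mathbb{C}l(V)$ its complexification with complex conjugation $c$, $T$ the linear antiautomorphism restricting to the identity on $V$, $a^\times=c(T(a))$. $\rho$ is $c$-compatible if $(\rho(a)\psi,\phi)=(\psi,\rho(a^\times)\phi)$. A vector $v$ is timelike if $Q(v)>0$. The chirality operator is $\chi=(-i)^{n/2+q}\rho(\omega)$ with $q=n-1$ and $\omega=e_1\cdots e_n$ the volume element of a pseudo-orthonormal basis. An operator $A$ on $K$ is Krein-positive if $(\psi,A\psi)>0$ for all nonzero $\psi\in K$. The time orientation is fixed compatibly with the Krein product: a timelike vector $e$ is future-directed iff $\rho(e)$ is Krein-positive. *)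

theory Defs
  imports "HOL-Analysis.Analysis"
begin

text \<open>V = real^'n (dimension CARD('n)), K = complex^'m (dimension CARD('m)).
  The quadratic form is Q v = B v v for a symmetric bilinear form B.
  Operators on K are complex matrices complex^'m^'m.\<close>

definition quad :: "('v \<Rightarrow> 'v \<Rightarrow> real) \<Rightarrow> 'v \<Rightarrow> real" where
  "quad B v = B v v"

definition symmetric_bilinear :: "(real^'n \<Rightarrow> real^'n \<Rightarrow> real) \<Rightarrow> bool" where
  "symmetric_bilinear B \<longleftrightarrow> bilinear B \<and> (\<forall>x y. B x y = B y x)"

definition pseudo_orthonormal_basis :: "(real^'n \<Rightarrow> real^'n \<Rightarrow> real) \<Rightarrow> (nat \<Rightarrow> real^'n) \<Rightarrow> bool" where
  "pseudo_orthonormal_basis B e \<longleftrightarrow>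
     span (e ` {..<CARD('n)}) = UNIV \<and>
     (\<forall>i<CARD('n). \<forall>j<CARD('n). i \<noteq> j \<longrightarrow> B (e i) (e j) = 0) \<and>
     (\<forall>i<CARD('n). quad B (e i) = 1 \<or> quad B (e i) = -1)"

definition anti_lorentz :: "(real^'n \<Rightarrow> real^'n \<Rightarrow> real) \<Rightarrow> bool" where
  "anti_lorentz B \<longleftrightarrow> symmetric_bilinear B \<and>
     (\<exists>e. pseudo_orthonormal_basis B e \<and> quad B (e 0) = 1 \<and>
          (\<forall>i. 1 \<le> i \<and> i < CARD('n) \<longrightarrow> quad B (e i) = -1))"

text \<open>A representation of the complexified Clifford algebra Cl(V,Q) (with v^2 = +Q(v))
  on K, given (via the universal property) by a real-linear map rho : V -> End(K)
  with rho(v)^2 = Q(v) id.\<close>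
definition clifford_rep :: "(real^'n \<Rightarrow> real^'n \<Rightarrow> real) \<Rightarrow> (real^'n \<Rightarrow> complex^'m^'m) \<Rightarrow> bool" where
  "clifford_rep B \<rho> \<longleftrightarrow> linear \<rho> \<and>
     (\<forall>v. \<rho> v ** \<rho> v = mat (complex_of_real (quad B v)))"

definition csubspace_vec :: "(complex^'m) set \<Rightarrow> bool" where
  "csubspace_vec W \<longleftrightarrow> 0 \<in> W \<and> (\<forall>x\<in>W. \<forall>y\<in>W. x + y \<in> W) \<and> (\<forall>c. \<forall>x\<in>W. c *s x \<in> W)"

text \<open>Irreducible: no invariant complex subspace other than 0 and K
  (invariance under the generators rho(v) is invariance under rho(Cl(V))).\<close>
definition irreducible_rep :: "(real^'n \<Rightarrow> complex^'m^'m) \<Rightarrow> bool" where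
  "irreducible_rep \<rho> \<longleftrightarrow>
     (\<forall>W. csubspace_vec W \<and> (\<forall>v. \<forall>w\<in>W. \<rho> v *v w \<in> W) \<longrightarrow> W = {0} \<or> W = UNIV)"

definition nondeg_hermitian :: "(complex^'m \<Rightarrow> complex^'m \<Rightarrow> complex) \<Rightarrow> bool" where
  "nondeg_hermitian h \<longleftrightarrow>
     (\<forall>x y z. h x (y + z) = h x y + h x z) \<and>
     (\<forall>c x y. h x (c *s y) = c * h x y) \<and>
     (\<forall>x y. h y x = cnj (h x y)) \<and>
     (\<forall>y. (\<forall>x. h x y = 0) \<longrightarrow> y = 0)"

text \<open>c-compatibility (rho(a) psi, phi) = (psi, rho(a^x) phi); since a -> a^x is an
  antilinear antiautomorphism with v^x = v for v in V, this is equivalent to the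
  condition on generators.\<close>
definition c_compatible :: "(complex^'m \<Rightarrow> complex^'m \<Rightarrow> complex) \<Rightarrow> (real^'n \<Rightarrow> complex^'m^'m) \<Rightarrow> bool" where
  "c_compatible h \<rho> \<longleftrightarrow> (\<forall>v \<psi> \<phi>. h (\<rho> v *v \<psi>) \<phi> = h \<psi> (\<rho> v *v \<phi>))"

definition krein_positive :: "(complex^'m \<Rightarrow> complex^'m \<Rightarrow> complex) \<Rightarrow> complex^'m^'m \<Rightarrow> bool" where
  "krein_positive h A \<longleftrightarrow> (\<forall>\<psi>. \<psi> \<noteq> 0 \<longrightarrow> Im (h \<psi> (A *v \<psi>)) = 0 \<and> Re (h \<psi> (A *v \<psi>)) > 0)"

text \<open>Volume element image rho(e_1 ... e_n) and chirality operator
  chi = (-i)^(n/2+q) rho(omega), q = n - 1.\<close>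
definition volume_op :: "(real^'n \<Rightarrow> complex^'m^'m) \<Rightarrow> (nat \<Rightarrow> real^'n) \<Rightarrow> complex^'m^'m" where
  "volume_op \<rho> e = foldr (\<lambda>i M. \<rho> (e i) ** M) [0..<CARD('n)] (mat 1)"

definition chirality :: "(real^'n \<Rightarrow> complex^'m^'m) \<Rightarrow> (nat \<Rightarrow> real^'n) \<Rightarrow> complex^'m^'m" where
  "chirality \<rho> e = mat ((- \<i>) ^ (CARD('n) div 2 + (CARD('n) - 1))) ** volume_op \<rho> e"

definition timelike :: "(real^'n \<Rightarrow> real^'n \<Rightarrow> real) \<Rightarrow> real^'n \<Rightarrow> bool" where
  "timelike B v \<longleftrightarrow> quad B v > 0"

text \<open>Time orientation fixed by the Krein product.\<close>
definition future_directed :: "(real^'n \<Rightarrow> real^'n \<Rightarrow> real) \<Rightarrow> (complex^'m \<Rightarrow> complex^'m \<Rightarrow> complex)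
    \<Rightarrow> (real^'n \<Rightarrow> complex^'m^'m) \<Rightarrow> real^'n \<Rightarrow> bool" where
  "future_directed B h \<rho> v \<longleftrightarrow> timelike B v \<and> krein_positive h (\<rho> v)"

end

theory Submission
  imports Defs
begin

text \<open>The chirality operator \<open>\<chi>\<close> is an involution that is skew for the Krein product and
  anticommutes with Clifford multiplication by vectors (this is where the even dimension and the
  anti-Lorentz signature enter). Hence its eigenspaces \<open>K\<^sub>+\<close> and \<open>K\<^sub>-\<close> are neutral, Clifford
  multiplication swaps them, and the Krein form of \<open>\<rho>(u) + \<chi>\<rho>(v)\<close> splits as that of
  \<open>\<rho>(u - v)\<close> on \<open>K\<^sub>+\<close> plus that of \<open>\<rho>(u + v)\<close> on \<open>K\<^sub>-\<close>. Since \<open>n > 2\<close>, every \<open>w\<close> has an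
  orthogonal spacelike \<open>a\<close>; then \<open>\<rho>(a)\<close> anticommutes with \<open>\<rho>(w)\<close>, exchanges \<open>K\<^sub>+\<close> and \<open>K\<^sub>-\<close> and
  rescales the Krein form of \<open>\<rho>(w)\<close> by \<open>-Q(a) > 0\<close>, so \<open>\<rho>(w)\<close> is positive on one half iff it is
  Krein-positive. Finally \<open>(\<rho>(w)\<psi>, \<rho>(w)\<^sup>2\<psi>) = Q(w) (\<psi>, \<rho>(w)\<psi>)\<close> shows that a Krein-positive
  \<open>\<rho>(w)\<close> has \<open>Q(w) > 0\<close>.\<close>

lemma mat_mult_vector: "mat c *v (x :: 'a::comm_ring_1^'n) = c *s x"
proof -
  have "(\<Sum>j\<in>UNIV. (if i = j then c else 0) * x $ j) = c * x $ i" for i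
  proof -
    have "(\<Sum>j\<in>UNIV. (if i = j then c else 0) * x $ j) = (\<Sum>j\<in>UNIV. if i = j then c * x $ j else 0)"
      by (rule sum.cong) auto
    then show ?thesis by simp
  qed
  then show ?thesis by (simp add: vec_eq_iff matrix_vector_mult_def mat_def)
qed

lemma scaleR_matrix_vector_mult:
  "(c *\<^sub>R (A :: complex^'m^'k)) *v x = complex_of_real c *s (A *v x)"
  by (simp add: vec_eq_iff matrix_vector_mult_def) (simp add: scaleR_conv_of_real sum_distrib_left mult.assoc)

lemma matrix_vector_mult_uminus_right: "A *v (- x) = - (A *v (x :: 'a::ring_1^'n))"
  using matrix_vector_mult_diff_distrib[of A 0 x] by simp

lemma pseudo_orthonormal_basis_inj_on:
  assumes "pseudo_orthonormal_basis B (e :: nat \<Rightarrow> real^'n)"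
  shows "inj_on e {..<CARD('n)}"
proof (rule inj_onI)
  fix i j assume ij: "i \<in> {..<CARD('n)}" "j \<in> {..<CARD('n)}" "e i = e j"
  show "i = j"
  proof (rule ccontr)
    assume "i \<noteq> j"
    then have "quad B (e i) = 0"
      using assms ij unfolding pseudo_orthonormal_basis_def quad_def by auto
    then show False using assms ij unfolding pseudo_orthonormal_basis_def by auto
  qed
qed

lemma pseudo_orthonormal_basis_expansion:
  assumes "pseudo_orthonormal_basis B (e :: nat \<Rightarrow> real^'n)"
  obtains c where "x = (\<Sum>i<CARD('n). c i *\<^sub>R e i)"
proof -
  have "x \<in> span (e ` {..<CARD('n)})"
    using assms unfolding pseudo_orthonormal_basis_def by simp
  then obtain u where "x = (\<Sum>w\<in>e ` {..<CARD('n)}. u w *\<^sub>R w)"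
    by (auto simp: span_finite)
  also have "\<dots> = (\<Sum>i<CARD('n). u (e i) *\<^sub>R e i)"
    by (subst sum.reindex[OF pseudo_orthonormal_basis_inj_on[OF assms]]) simp
  finally show ?thesis by (rule that)
qed

lemma pseudo_orthonormal_coefficient:
  assumes "symmetric_bilinear B" "pseudo_orthonormal_basis B (e :: nat \<Rightarrow> real^'n)"
    and "j < CARD('n)"
  shows "B (e j) (\<Sum>i<CARD('n). c i *\<^sub>R e i) = c j * quad B (e j)"
proof -
  have lin: "linear (B (e j))"
    using assms(1) unfolding symmetric_bilinear_def bilinear_def by simp
  have "B (e j) (\<Sum>i<CARD('n). c i *\<^sub>R e i) = (\<Sum>i<CARD('n). c i * B (e j) (e i))"
    by (simp add: linear_sum[OF lin] linear_scale[OF lin])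
  also have "\<dots> = (\<Sum>i<CARD('n). if i = j then c j * quad B (e j) else 0)"
    using assms unfolding pseudo_orthonormal_basis_def quad_def symmetric_bilinear_def
    by (intro sum.cong) auto
  also have "\<dots> = c j * quad B (e j)" using assms(3) by simp
  finally show ?thesis .
qed

lemma quad_pseudo_orthonormal_expansion:
  assumes "symmetric_bilinear B" "pseudo_orthonormal_basis B (e :: nat \<Rightarrow> real^'n)"
  shows "quad B (\<Sum>i<CARD('n). c i *\<^sub>R e i) = (\<Sum>i<CARD('n). (c i)\<^sup>2 * quad B (e i))"
proof -
  let ?x = "\<Sum>i<CARD('n). c i *\<^sub>R e i"
  have lin: "linear (\<lambda>y. B y ?x)"
    using assms(1) unfolding symmetric_bilinear_def bilinear_def by simp
  have "quad B ?x = (\<Sum>i<CARD('n). c i * B (e i) ?x)"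
    unfolding quad_def by (simp add: linear_sum[OF lin] linear_scale[OF lin])
  also have "\<dots> = (\<Sum>i<CARD('n). (c i)\<^sup>2 * quad B (e i))"
    by (intro sum.cong refl) (simp add: pseudo_orthonormal_coefficient[OF assms] power2_eq_square)
  finally show ?thesis .
qed

lemma quad_nonpos_if_orthogonal_to_timelike_basis_vector:
  assumes "symmetric_bilinear B" "pseudo_orthonormal_basis B (f :: nat \<Rightarrow> real^'n)"
    and "\<forall>i. 1 \<le> i \<and> i < CARD('n) \<longrightarrow> quad B (f i) = -1"
    and "B (f 0) x = 0"
  shows "quad B x \<le> 0"
proof -
  obtain d where d: "x = (\<Sum>i<CARD('n). d i *\<^sub>R f i)"
    using pseudo_orthonormal_basis_expansion[OF assms(2)] by blast
  have "d 0 * quad B (f 0) = 0"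
    using pseudo_orthonormal_coefficient[OF assms(1,2), of 0 d] assms(4) d by simp
  then have "d 0 = 0"
    using assms(2) unfolding pseudo_orthonormal_basis_def by fastforce
  have "quad B x = (\<Sum>i<CARD('n). (d i)\<^sup>2 * quad B (f i))"
    unfolding d by (rule quad_pseudo_orthonormal_expansion[OF assms(1,2)])
  also have "\<dots> \<le> 0"
  proof (intro sum_nonpos)
    fix i assume "i \<in> {..<CARD('n)}"
    then show "(d i)\<^sup>2 * quad B (f i) \<le> 0"
      using assms(3) \<open>d 0 = 0\<close> by (cases "i = 0") auto
  qed
  finally show ?thesis .
qed

lemma anti_lorentz_unique_timelike_basis_vector:
  assumes "anti_lorentz B" "pseudo_orthonormal_basis B (e :: nat \<Rightarrow> real^'n)"
  shows "\<exists>a<CARD('n). quad B (e a) = 1 \<and> (\<forall>i<CARD('n). i \<noteq> a \<longrightarrow> quad B (e i) = -1)"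
proof -
  obtain f where f: "pseudo_orthonormal_basis B f" "quad B (f 0) = 1"
      "\<forall>i. 1 \<le> i \<and> i < CARD('n) \<longrightarrow> quad B (f i) = -1" and sb: "symmetric_bilinear B"
    using assms(1) unfolding anti_lorentz_def by blast
  have bil: "bilinear B" and sym: "\<And>x y. B x y = B y x"
    using sb unfolding symmetric_bilinear_def by auto
  have pm: "\<forall>i<CARD('n). quad B (e i) = 1 \<or> quad B (e i) = -1"
    using assms(2) unfolding pseudo_orthonormal_basis_def by blast
  have ex: "\<exists>a<CARD('n). quad B (e a) = 1"
  proof (rule ccontr)
    assume "\<not> ?thesis"
    then have neg: "\<forall>i<CARD('n). quad B (e i) = -1" using pm by auto
    obtain c where c: "f 0 = (\<Sum>i<CARD('n). c i *\<^sub>R e i)"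
      using pseudo_orthonormal_basis_expansion[OF assms(2)] by blast
    have "quad B (f 0) = (\<Sum>i<CARD('n). (c i)\<^sup>2 * quad B (e i))"
      unfolding c by (rule quad_pseudo_orthonormal_expansion[OF sb assms(2)])
    also have "\<dots> \<le> 0" using neg by (intro sum_nonpos) simp
    finally show False using f(2) by simp
  qed
  have uniq: "a = b"
    if ab: "a < CARD('n)" "b < CARD('n)" "quad B (e a) = 1" "quad B (e b) = 1" for a b
  proof (rule ccontr)
    assume "a \<noteq> b"
    then have eab: "B (e a) (e b) = 0"
      using assms(2) ab unfolding pseudo_orthonormal_basis_def by auto
    \<comment> \<open>a nonzero vector of the positive plane spanned by e a, e b that is orthogonal to f 0\<close>
    define x where "x = B (f 0) (e b) *\<^sub>R e a - B (f 0) (e a) *\<^sub>R e b"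
    have "B (f 0) x = 0" unfolding x_def
      by (simp add: bilinear_rsub[OF bil] bilinear_rmul[OF bil] mult.commute)
    then have "quad B x \<le> 0"
      by (rule quad_nonpos_if_orthogonal_to_timelike_basis_vector[OF sb f(1,3)])
    moreover have "quad B x = (B (f 0) (e b))\<^sup>2 + (B (f 0) (e a))\<^sup>2"
      using ab eab sym[of "e b" "e a"] unfolding quad_def x_def
      by (simp add: bilinear_lsub[OF bil] bilinear_rsub[OF bil] bilinear_lmul[OF bil]
          bilinear_rmul[OF bil] power2_eq_square)
    ultimately have "B (f 0) (e a) = 0" by (smt (verit) zero_le_power2 power2_less_eq_zero_iff)
    then have "quad B (e a) \<le> 0"
      by (rule quad_nonpos_if_orthogonal_to_timelike_basis_vector[OF sb f(1,3)])
    then show False using ab by simp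
  qed
  from ex obtain a where "a < CARD('n)" "quad B (e a) = 1" by blast
  then show ?thesis using uniq pm by metis
qed

lemma anti_lorentz_prod_quad_basis:
  assumes "anti_lorentz B" "pseudo_orthonormal_basis B (e :: nat \<Rightarrow> real^'n)" "even CARD('n)"
  shows "(\<Prod>i<CARD('n). quad B (e i)) = -1"
proof -
  obtain a where a: "a < CARD('n)" "quad B (e a) = 1"
    "\<forall>i<CARD('n). i \<noteq> a \<longrightarrow> quad B (e i) = -1"
    using anti_lorentz_unique_timelike_basis_vector[OF assms(1,2)] by blast
  have "(\<Prod>i<CARD('n). quad B (e i)) = quad B (e a) * (\<Prod>i\<in>{..<CARD('n)} - {a}. quad B (e i))"
    using a(1) by (simp add: prod.remove)
  also have "(\<Prod>i\<in>{..<CARD('n)} - {a}. quad B (e i)) = (\<Prod>i\<in>{..<CARD('n)} - {a}. -1)"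
    using a(3) by (intro prod.cong) auto
  also have "\<dots> = (-1) ^ (CARD('n) - 1)" using a(1) by simp
  also have "\<dots> = -1" using assms(3) by (simp add: minus_one_power_iff)
  finally show ?thesis using a(2) by simp
qed

lemma anti_lorentz_orthogonal_spacelike:
  fixes B :: "real^'n \<Rightarrow> real^'n \<Rightarrow> real"
  assumes "anti_lorentz B" "CARD('n) > 2"
  obtains a where "quad B a < 0" "B a w = 0"
proof -
  obtain f where f: "pseudo_orthonormal_basis B f"
      "\<forall>i. 1 \<le> i \<and> i < CARD('n) \<longrightarrow> quad B (f i) = -1" and sb: "symmetric_bilinear B"
    using assms(1) unfolding anti_lorentz_def by blast
  have bil: "bilinear B" and sym: "\<And>x y. B x y = B y x"
    using sb unfolding symmetric_bilinear_def by auto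
  have q1: "B (f 1) (f 1) = -1" and q2: "B (f 2) (f 2) = -1"
    using f(2) assms(2) unfolding quad_def by auto
  have o12: "B (f 1) (f 2) = 0"
    using f(1) assms(2) unfolding pseudo_orthonormal_basis_def by auto
  define \<alpha> where "\<alpha> = B w (f 2)"
  define \<beta> where "\<beta> = B w (f 1)"
  show ?thesis
  proof (cases "\<alpha> = 0 \<and> \<beta> = 0")
    case True
    then show ?thesis
      using that[of "f 1"] q1 sym[of "f 1" w] unfolding quad_def \<beta>_def by auto
  next
    case False
    define a where "a = \<alpha> *\<^sub>R f 1 - \<beta> *\<^sub>R f 2"
    have "B a w = 0" unfolding a_def \<alpha>_def \<beta>_def using sym[of "f 1" w] sym[of "f 2" w]
      by (simp add: bilinear_lsub[OF bil] bilinear_lmul[OF bil])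
    moreover have "quad B a = - (\<alpha>\<^sup>2 + \<beta>\<^sup>2)"
      unfolding quad_def a_def using q1 q2 o12 sym[of "f 2" "f 1"]
      by (simp add: bilinear_lsub[OF bil] bilinear_rsub[OF bil] bilinear_lmul[OF bil]
          bilinear_rmul[OF bil] power2_eq_square)
    moreover have "\<alpha>\<^sup>2 + \<beta>\<^sup>2 > 0" using False by (simp add: sum_power2_gt_zero_iff)
    ultimately show ?thesis by (intro that[of a]) auto
  qed
qed

text \<open>The sign by which reversing a product of \<open>k\<close> pairwise anticommuting factors changes it.\<close>
fun reversal_sign :: "nat \<Rightarrow> complex" where
  "reversal_sign 0 = 1"
| "reversal_sign (Suc k) = (-1) ^ k * reversal_sign k"

lemma reversal_sign_even: "reversal_sign (2 * k) = (-1) ^ k"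
proof (induction k)
  case (Suc k)
  have "reversal_sign (2 * Suc k) = reversal_sign (Suc (Suc (2 * k)))" by simp
  also have "\<dots> = - reversal_sign (2 * k)" by (simp add: minus_one_power_iff)
  finally show ?case using Suc by simp
qed simp

definition chirality_phase :: "nat \<Rightarrow> complex" where
  "chirality_phase n = (- \<i>) ^ (n div 2 + (n - 1))"

lemma chirality_phase_reversal:
  assumes "even n" "0 < n"
  shows "cnj (chirality_phase n) * reversal_sign n = - chirality_phase n"
    and "chirality_phase n * chirality_phase n * reversal_sign n = -1"
proof -
  define j where "j = n div 2 - 1"
  have nj: "n = 2 * (j + 1)"
    using assms unfolding j_def by (auto elim!: evenE)
  have exponent: "n div 2 + (n - 1) = 3 * j + 2" using nj by simp
  have sign: "reversal_sign n = (-1) ^ (j + 1)" unfolding nj reversal_sign_even ..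
  have parity: "even (3 * j + 2) \<longleftrightarrow> even j" by presburger
  have phase: "chirality_phase n = (-1) ^ (3 * j + 2) * \<i> ^ (3 * j + 2)"
    unfolding chirality_phase_def exponent by (metis mult_minus1 power_mult_distrib)
  have "cnj (chirality_phase n) = \<i> ^ (3 * j + 2)"
    unfolding chirality_phase_def exponent by simp
  then show "cnj (chirality_phase n) * reversal_sign n = - chirality_phase n"
    unfolding sign phase using parity by (simp add: minus_one_power_iff)
  have "chirality_phase n * chirality_phase n = (-1) ^ (3 * j + 2)"
    unfolding chirality_phase_def exponent by (simp flip: power_mult_distrib)
  then show "chirality_phase n * chirality_phase n * reversal_sign n = -1"
    unfolding sign using parity by (simp add: minus_one_power_iff)
qed

locale clifford_frame =
  fixes B :: "real^'n \<Rightarrow> real^'n \<Rightarrow> real"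
    and \<rho> :: "real^'n \<Rightarrow> complex^'m^'m"
    and e :: "nat \<Rightarrow> real^'n"
  assumes symmetric: "symmetric_bilinear B"
    and rep: "clifford_rep B \<rho>"
    and basis: "pseudo_orthonormal_basis B e"
begin

lemma rho_linear: "linear \<rho>"
  using rep unfolding clifford_rep_def by simp

lemma rho_square: "\<rho> w *v (\<rho> w *v z) = complex_of_real (quad B w) *s z"
  using rep unfolding clifford_rep_def by (simp add: matrix_vector_mul_assoc mat_mult_vector)

lemma rho_anticommutator:
  "\<rho> x *v (\<rho> y *v z) + \<rho> y *v (\<rho> x *v z) = complex_of_real (2 * B x y) *s z"
proof -
  have bil: "bilinear B" and sym: "B y x = B x y"
    using symmetric unfolding symmetric_bilinear_def by auto
  have "quad B (x + y) = quad B x + 2 * B x y + quad B y"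
    unfolding quad_def by (simp add: bilinear_ladd[OF bil] bilinear_radd[OF bil] sym)
  then have "\<rho> x *v (\<rho> x *v z) + \<rho> x *v (\<rho> y *v z) + (\<rho> y *v (\<rho> x *v z) + \<rho> y *v (\<rho> y *v z))
      = complex_of_real (quad B x + 2 * B x y + quad B y) *s z"
    using rho_square[of "x + y" z]
    by (simp add: linear_add[OF rho_linear] matrix_vector_mult_add_rdistrib
        matrix_vector_right_distrib add_ac)
  then show ?thesis
    by (simp add: rho_square vec_eq_iff algebra_simps)
qed

lemma rho_anticommute_orthogonal:
  "B x y = 0 \<Longrightarrow> \<rho> x *v (\<rho> y *v z) = - (\<rho> y *v (\<rho> x *v z))"
  using rho_anticommutator[of x y z] by (simp add: eq_neg_iff_add_eq_0)

lemma rho_anticommute_basis: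
  "i < CARD('n) \<Longrightarrow> j < CARD('n) \<Longrightarrow> i \<noteq> j \<Longrightarrow>
     \<rho> (e i) *v (\<rho> (e j) *v z) = - (\<rho> (e j) *v (\<rho> (e i) *v z))"
  using basis by (intro rho_anticommute_orthogonal) (auto simp: pseudo_orthonormal_basis_def)

definition monomial :: "nat list \<Rightarrow> complex^'m \<Rightarrow> complex^'m" where
  "monomial xs z = foldr (\<lambda>i w. \<rho> (e i) *v w) xs z"

lemma monomial_Nil [simp]: "monomial [] z = z"
  by (simp add: monomial_def)

lemma monomial_Cons [simp]: "monomial (i # xs) z = \<rho> (e i) *v monomial xs z"
  by (simp add: monomial_def)

lemma monomial_append: "monomial (xs @ ys) z = monomial xs (monomial ys z)"
  by (simp add: monomial_def)

lemma monomial_scale: "monomial xs (c *s z) = c *s monomial xs z"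
  by (induction xs) (simp_all add: vector_scalar_commute)

lemma monomial_add: "monomial xs (y + z) = monomial xs y + monomial xs z"
  by (induction xs) (simp_all add: matrix_vector_right_distrib)

lemma monomial_zero: "monomial xs 0 = 0"
  by (induction xs) simp_all

lemma volume_op_action: "volume_op \<rho> e *v z = monomial [0..<CARD('n)] z"
proof -
  have "foldr (\<lambda>i M. \<rho> (e i) ** M) xs N *v z = monomial xs (N *v z)" for xs N
    by (induction xs) (simp_all add: matrix_vector_mul_assoc[symmetric])
  then show ?thesis by (simp add: volume_op_def)
qed

lemma basis_monomial_commute:
  "set xs \<subseteq> {..<CARD('n)} \<Longrightarrow> j < CARD('n) \<Longrightarrow> j \<notin> set xs \<Longrightarrow>
     \<rho> (e j) *v monomial xs z = (-1) ^ length xs *s monomial xs (\<rho> (e j) *v z)"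
proof (induction xs)
  case (Cons a xs)
  have "\<rho> (e j) *v monomial (a # xs) z = - (\<rho> (e a) *v (\<rho> (e j) *v monomial xs z))"
    using Cons.prems by (simp add: rho_anticommute_basis[of j a])
  also have "\<dots> = - (\<rho> (e a) *v ((-1) ^ length xs *s monomial xs (\<rho> (e j) *v z)))"
    using Cons by simp
  also have "\<dots> = (-1) ^ length (a # xs) *s monomial (a # xs) (\<rho> (e j) *v z)"
    by (simp add: vector_scalar_commute)
  finally show ?case .
qed simp

lemma monomial_basis_commute:
  "set xs \<subseteq> {..<CARD('n)} \<Longrightarrow> j < CARD('n) \<Longrightarrow> j \<notin> set xs \<Longrightarrow>
     monomial xs (\<rho> (e j) *v z) = (-1) ^ length xs *s (\<rho> (e j) *v monomial xs z)"
  by (simp add: basis_monomial_commute vector_smult_assoc flip: power_add)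

lemma basis_monomial_commute_member:
  "distinct xs \<Longrightarrow> set xs \<subseteq> {..<CARD('n)} \<Longrightarrow> j \<in> set xs \<Longrightarrow>
     \<rho> (e j) *v monomial xs z = (-1) ^ (length xs - 1) *s monomial xs (\<rho> (e j) *v z)"
proof (induction xs)
  case (Cons a xs)
  show ?case
  proof (cases "a = j")
    case True
    then have "j \<notin> set xs" using Cons.prems by auto
    then have "(-1) ^ (length (a # xs) - 1) *s monomial (a # xs) (\<rho> (e j) *v z) =
        (-1) ^ length xs *s (\<rho> (e j) *v ((-1) ^ length xs *s (\<rho> (e j) *v monomial xs z)))"
      using True Cons.prems by (simp add: monomial_basis_commute)
    also have "\<dots> = \<rho> (e j) *v (\<rho> (e j) *v monomial xs z)"
      by (simp add: vector_scalar_commute vector_smult_assoc flip: power_add)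
    finally show ?thesis using True by simp
  next
    case False
    then have "j \<in> set xs" using Cons.prems by auto
    then obtain k where k: "length xs = Suc k" by (cases xs) auto
    have "\<rho> (e j) *v monomial (a # xs) z = - (\<rho> (e a) *v (\<rho> (e j) *v monomial xs z))"
      unfolding monomial_Cons using Cons.prems False \<open>j \<in> set xs\<close>
      by (intro rho_anticommute_basis) auto
    also have "\<dots> = - (\<rho> (e a) *v ((-1) ^ k *s monomial xs (\<rho> (e j) *v z)))"
      using Cons.IH Cons.prems \<open>j \<in> set xs\<close> k by simp
    also have "\<dots> = (-1) ^ (length (a # xs) - 1) *s monomial (a # xs) (\<rho> (e j) *v z)"
      using k by (simp add: vector_scalar_commute)
    finally show ?thesis .
  qed
qed simp

lemma volume_anticommute_basis:
  assumes "even CARD('n)" "j < CARD('n)"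
  shows "\<rho> (e j) *v monomial [0..<CARD('n)] z = - monomial [0..<CARD('n)] (\<rho> (e j) *v z)"
proof -
  have "(-1 :: complex) ^ (CARD('n) - 1) = -1"
    using assms(1) by (simp add: minus_one_power_iff)
  then show ?thesis
    using basis_monomial_commute_member[of "[0..<CARD('n)]" j z] assms
    by (simp add: vector_smult_lneg atLeast0LessThan)
qed

lemma volume_anticommute:
  assumes "even CARD('n)"
  shows "\<rho> w *v monomial [0..<CARD('n)] z = - monomial [0..<CARD('n)] (\<rho> w *v z)"
proof -
  have "w \<in> span (e ` {..<CARD('n)})"
    using basis by (simp add: pseudo_orthonormal_basis_def)
  then have "\<forall>z. \<rho> w *v monomial [0..<CARD('n)] z = - monomial [0..<CARD('n)] (\<rho> w *v z)"
  proof (induction rule: span_induct_alt)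
    case base
    show ?case by (simp add: linear_0[OF rho_linear] monomial_zero)
  next
    case (step c x y)
    then obtain j where "j < CARD('n)" "x = e j" by auto
    then show ?case
      using step.IH volume_anticommute_basis[OF assms]
      by (simp add: linear_add[OF rho_linear] linear_scale[OF rho_linear]
          matrix_vector_mult_add_rdistrib scaleR_matrix_vector_mult monomial_add monomial_scale)
  qed
  then show ?thesis by blast
qed

lemma monomial_square:
  "distinct xs \<Longrightarrow> set xs \<subseteq> {..<CARD('n)} \<Longrightarrow>
     monomial xs (monomial xs z) =
       (reversal_sign (length xs) * complex_of_real (\<Prod>i\<in>set xs. quad B (e i))) *s z"
proof (induction xs)
  case (Cons a xs)
  have "monomial (a # xs) (monomial (a # xs) z) =
      \<rho> (e a) *v ((-1) ^ length xs *s (\<rho> (e a) *v monomial xs (monomial xs z)))"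
    using monomial_basis_commute[of xs a "monomial xs z"] Cons.prems by simp
  also have "\<dots> = ((-1) ^ length xs * complex_of_real (quad B (e a)) *
      (reversal_sign (length xs) * complex_of_real (\<Prod>i\<in>set xs. quad B (e i)))) *s z"
    using Cons by (simp add: vector_scalar_commute rho_square vector_smult_assoc)
  also have "\<dots> = (reversal_sign (length (a # xs)) *
      complex_of_real (\<Prod>i\<in>set (a # xs). quad B (e i))) *s z"
    using Cons.prems by (simp add: algebra_simps)
  finally show ?case .
qed simp

lemma monomial_rev:
  "distinct xs \<Longrightarrow> set xs \<subseteq> {..<CARD('n)} \<Longrightarrow>
     monomial (rev xs) z = reversal_sign (length xs) *s monomial xs z"
proof (induction xs arbitrary: z)
  case (Cons a xs)
  have "monomial (rev (a # xs)) z = reversal_sign (length xs) *s monomial xs (\<rho> (e a) *v z)"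
    using Cons by (simp add: monomial_append)
  also have "\<dots> = reversal_sign (length (a # xs)) *s monomial (a # xs) z"
    using Cons.prems by (simp add: monomial_basis_commute vector_smult_assoc mult.commute)
  finally show ?case .
qed simp

lemma monomial_adjoint:
  assumes "c_compatible h \<rho>"
  shows "h (monomial xs x) y = h x (monomial (rev xs) y)"
proof (induction xs arbitrary: y)
  case (Cons a xs)
  have "h (monomial (a # xs) x) y = h (monomial xs x) (\<rho> (e a) *v y)"
    using assms unfolding c_compatible_def by simp
  also have "\<dots> = h x (monomial (rev (a # xs)) y)"
    using Cons by (simp add: monomial_append)
  finally show ?case .
qed simp

lemma chirality_action:
  "chirality \<rho> e *v z = chirality_phase CARD('n) *s monomial [0..<CARD('n)] z"
  unfolding chirality_def chirality_phase_def[symmetric]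
  by (simp only: matrix_vector_mul_assoc[symmetric] mat_mult_vector volume_op_action)

text \<open>For the anti-Lorentz signature the volume element squares to \<open>-(-1)^(n(n-1)/2)\<close>, which
  the phase of the chirality operator compensates.\<close>
lemma chirality_square:
  assumes "anti_lorentz B" "even CARD('n)"
  shows "chirality \<rho> e *v (chirality \<rho> e *v z) = z"
proof -
  have "(\<Prod>i\<in>set [0..<CARD('n)]. quad B (e i)) = -1"
    using anti_lorentz_prod_quad_basis[OF assms(1) basis assms(2)] by (simp add: atLeast0LessThan)
  then have "monomial [0..<CARD('n)] (monomial [0..<CARD('n)] z) = - (reversal_sign CARD('n) *s z)"
    using monomial_square[of "[0..<CARD('n)]" z] by (simp add: vector_smult_lneg atLeast0LessThan)
  then have "chirality \<rho> e *v (chirality \<rho> e *v z) =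
      - ((chirality_phase CARD('n) * chirality_phase CARD('n) * reversal_sign CARD('n)) *s z)"
    by (simp add: chirality_action monomial_scale vector_smult_assoc vector_scalar_commute mult.assoc)
  then show ?thesis
    using chirality_phase_reversal(2)[OF assms(2)] by simp
qed

lemma chirality_skew:
  assumes "nondeg_hermitian h" "c_compatible h \<rho>" "even CARD('n)"
  shows "h (chirality \<rho> e *v x) y = - h x (chirality \<rho> e *v y)"
proof -
  have h_scale: "h x (c *s y) = c * h x y" and h_lscale: "h (c *s x) y = cnj c * h x y" for c x y
    using assms(1) unfolding nondeg_hermitian_def
    by (metis complex_cnj_cnj complex_cnj_mult)+
  have "h (chirality \<rho> e *v x) y =
      cnj (chirality_phase CARD('n)) * h x (monomial (rev [0..<CARD('n)]) y)"
    by (simp add: chirality_action h_lscale monomial_adjoint[OF assms(2)])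
  also have "\<dots> = cnj (chirality_phase CARD('n)) * reversal_sign CARD('n) *
      h x (monomial [0..<CARD('n)] y)"
    using monomial_rev[of "[0..<CARD('n)]" y] by (simp add: atLeast0LessThan h_scale)
  also have "\<dots> = - h x (chirality \<rho> e *v y)"
    by (simp add: chirality_phase_reversal(1)[OF assms(3)] chirality_action h_scale)
  finally show ?thesis .
qed

lemma chirality_anticommute:
  assumes "even CARD('n)"
  shows "chirality \<rho> e *v (\<rho> w *v z) = - (\<rho> w *v (chirality \<rho> e *v z))"
  by (simp add: chirality_action volume_anticommute[OF assms] vector_scalar_commute
      vector_smult_rneg)

end

locale chiral_krein_space =
  fixes h :: "complex^'m \<Rightarrow> complex^'m \<Rightarrow> complex"
    and \<rho> :: "'v::ab_group_add \<Rightarrow> complex^'m^'m"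
    and \<Gamma> :: "complex^'m^'m"
    and Q :: "'v \<Rightarrow> real"
  assumes h_add: "h x (y + z) = h x y + h x z"
    and h_scale: "h x (c *s y) = c * h x y"
    and h_hermitian: "h y x = cnj (h x y)"
    and rho_add: "\<rho> (u + w) = \<rho> u + \<rho> w"
    and rho_square: "\<rho> w *v (\<rho> w *v z) = complex_of_real (Q w) *s z"
    and rho_selfadjoint: "h (\<rho> w *v x) y = h x (\<rho> w *v y)"
    and grading_square: "\<Gamma> *v (\<Gamma> *v z) = z"
    and grading_skew: "h (\<Gamma> *v x) y = - h x (\<Gamma> *v y)"
    and grading_anticommute: "\<Gamma> *v (\<rho> w *v z) = - (\<rho> w *v (\<Gamma> *v z))"
    and anticommuting_spacelike: "\<exists>a. Q a < 0 \<and> (\<forall>z. \<rho> a *v (\<rho> w *v z) = - (\<rho> w *v (\<rho> a *v z)))"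
begin

lemma rho_diff: "\<rho> (u - w) = \<rho> u - \<rho> w"
  using rho_add[of "u - w" w] by (simp add: eq_diff_eq)

lemma h_zero [simp]: "h x 0 = 0"
  using h_scale[of x 0 0] by simp

lemma h_minus: "h x (- y) = - h x y"
  using h_scale[of x "-1" y] by (simp only: vector_sneg_minus1[symmetric]) simp

lemma h_lminus: "h (- x) y = - h x y"
  by (metis h_minus h_hermitian complex_cnj_minus)

lemma h_ladd: "h (x + y) z = h x z + h y z"
  by (metis h_add h_hermitian complex_cnj_add)

lemma h_lscale: "h (c *s x) z = cnj c * h x z"
  by (metis h_scale h_hermitian complex_cnj_mult complex_cnj_cnj)

lemma h_lzero [simp]: "h 0 x = 0"
  using h_lscale[of 0 0 x] by simp

definition chiral_plus :: "(complex^'m) set" where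
  "chiral_plus = {\<psi>. \<Gamma> *v \<psi> = \<psi>}"

definition chiral_minus :: "(complex^'m) set" where
  "chiral_minus = {\<psi>. \<Gamma> *v \<psi> = - \<psi>}"

definition positive_on :: "complex^'m^'m \<Rightarrow> (complex^'m) set \<Rightarrow> bool" where
  "positive_on A S \<longleftrightarrow> (\<forall>\<psi>\<in>S. \<psi> \<noteq> 0 \<longrightarrow> 0 < h \<psi> (A *v \<psi>))"

lemma chiral_decomposition:
  obtains p m where "\<psi> = p + m" "p \<in> chiral_plus" "m \<in> chiral_minus"
proof
  show "\<psi> = (1/2 :: complex) *s (\<psi> + \<Gamma> *v \<psi>) + (1/2 :: complex) *s (\<psi> - \<Gamma> *v \<psi>)"
    by (simp add: vec_eq_iff field_simps)
  show "(1/2 :: complex) *s (\<psi> + \<Gamma> *v \<psi>) \<in> chiral_plus"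
    by (simp add: chiral_plus_def vector_scalar_commute matrix_vector_right_distrib grading_square add.commute)
  show "(1/2 :: complex) *s (\<psi> - \<Gamma> *v \<psi>) \<in> chiral_minus"
    by (simp add: chiral_minus_def vector_scalar_commute matrix_vector_mult_diff_distrib grading_square
        vec_eq_iff)
qed

lemma chiral_plus_neutral: "p \<in> chiral_plus \<Longrightarrow> q \<in> chiral_plus \<Longrightarrow> h p q = 0"
  using grading_skew[of p q] unfolding chiral_plus_def by simp

lemma chiral_minus_neutral: "p \<in> chiral_minus \<Longrightarrow> q \<in> chiral_minus \<Longrightarrow> h p q = 0"
  using grading_skew[of p q] unfolding chiral_minus_def by (simp add: h_minus h_lminus)

lemma rho_chiral_plus: "p \<in> chiral_plus \<Longrightarrow> \<rho> w *v p \<in> chiral_minus"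
  unfolding chiral_plus_def chiral_minus_def by (simp add: grading_anticommute)

lemma rho_chiral_minus: "m \<in> chiral_minus \<Longrightarrow> \<rho> w *v m \<in> chiral_plus"
  unfolding chiral_plus_def chiral_minus_def by (simp add: grading_anticommute matrix_vector_mult_uminus_right)

lemma krein_form_chiral_split:
  assumes "p \<in> chiral_plus" "m \<in> chiral_minus"
  shows "h (p + m) (\<rho> a *v p + \<rho> b *v m) = h p (\<rho> a *v p) + h m (\<rho> b *v m)"
  using chiral_plus_neutral[OF assms(1) rho_chiral_minus[OF assms(2)]]
    chiral_minus_neutral[OF assms(2) rho_chiral_plus[OF assms(1)]]
  by (simp add: h_add h_ladd)

lemma krein_positive_iff_chiral_parts:
  assumes split: "\<And>p m. p \<in> chiral_plus \<Longrightarrow> m \<in> chiral_minus \<Longrightarrow>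
      h (p + m) (A *v (p + m)) = h p (\<rho> a *v p) + h m (\<rho> b *v m)"
  shows "krein_positive h A \<longleftrightarrow> positive_on (\<rho> a) chiral_plus \<and> positive_on (\<rho> b) chiral_minus"
proof
  assume A: "krein_positive h A"
  have zero_plus: "0 \<in> chiral_plus" and zero_minus: "0 \<in> chiral_minus"
    by (simp_all add: chiral_plus_def chiral_minus_def)
  have "0 < h \<psi> (A *v \<psi>)" if "\<psi> \<noteq> 0" for \<psi>
    using A that unfolding krein_positive_def by (simp add: less_complex_def)
  then show "positive_on (\<rho> a) chiral_plus \<and> positive_on (\<rho> b) chiral_minus"
    unfolding positive_on_def
    using split[OF _ zero_minus] split[OF zero_plus] by (metis add_0 add.right_neutral h_lzero)
next
  assume pos: "positive_on (\<rho> a) chiral_plus \<and> positive_on (\<rho> b) chiral_minus"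
  have nonneg: "0 \<le> h p (\<rho> a *v p)" "0 \<le> h m (\<rho> b *v m)"
    if "p \<in> chiral_plus" "m \<in> chiral_minus" for p m
    using pos that unfolding positive_on_def by (metis h_lzero order.refl order_less_imp_le)+
  show "krein_positive h A" unfolding krein_positive_def
  proof (intro allI impI)
    fix \<psi> :: "complex^'m" assume "\<psi> \<noteq> 0"
    obtain p m where pm: "\<psi> = p + m" "p \<in> chiral_plus" "m \<in> chiral_minus"
      by (rule chiral_decomposition)
    have "0 < h \<psi> (A *v \<psi>)"
    proof (cases "p = 0")
      case True
      then have "0 < h m (\<rho> b *v m)" using pm \<open>\<psi> \<noteq> 0\<close> pos unfolding positive_on_def by auto
      then show ?thesis using nonneg[OF pm(2,3)] split[OF pm(2,3)] pm(1) by (simp add: add_nonneg_pos)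
    next
      case False
      then have "0 < h p (\<rho> a *v p)" using pm pos unfolding positive_on_def by auto
      then show ?thesis using nonneg[OF pm(2,3)] split[OF pm(2,3)] pm(1) by (simp add: add_pos_nonneg)
    qed
    then show "Im (h \<psi> (A *v \<psi>)) = 0 \<and> 0 < Re (h \<psi> (A *v \<psi>))"
      by (simp add: less_complex_def)
  qed
qed

lemma krein_positive_rho_iff:
  "krein_positive h (\<rho> w) \<longleftrightarrow> positive_on (\<rho> w) chiral_plus \<and> positive_on (\<rho> w) chiral_minus"
  by (rule krein_positive_iff_chiral_parts)
    (simp add: matrix_vector_right_distrib krein_form_chiral_split)

lemma krein_positive_chiral_iff:
  "krein_positive h (\<rho> u + \<Gamma> ** \<rho> v) \<longleftrightarrow>
     positive_on (\<rho> (u - v)) chiral_plus \<and> positive_on (\<rho> (u + v)) chiral_minus"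
proof (rule krein_positive_iff_chiral_parts)
  fix p m assume pm: "p \<in> chiral_plus" "m \<in> chiral_minus"
  have "\<Gamma> *v (\<rho> v *v p) = - (\<rho> v *v p)" "\<Gamma> *v (\<rho> v *v m) = \<rho> v *v m"
    using pm unfolding chiral_plus_def chiral_minus_def
    by (simp_all add: grading_anticommute matrix_vector_mult_uminus_right)
  then have "(\<rho> u + \<Gamma> ** \<rho> v) *v (p + m) = \<rho> (u - v) *v p + \<rho> (u + v) *v m"
    by (simp add: matrix_vector_mult_add_rdistrib matrix_vector_mul_assoc[symmetric]
        matrix_vector_right_distrib rho_add rho_diff matrix_vector_mult_diff_rdistrib)
  then show "h (p + m) ((\<rho> u + \<Gamma> ** \<rho> v) *v (p + m)) =
      h p (\<rho> (u - v) *v p) + h m (\<rho> (u + v) *v m)"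
    by (simp add: krein_form_chiral_split[OF pm])
qed

lemma positive_on_transfer:
  assumes pos: "positive_on (\<rho> w) S" and maps: "\<And>m. m \<in> T \<Longrightarrow> \<rho> a *v m \<in> S"
    and a: "Q a < 0" "\<And>z. \<rho> a *v (\<rho> w *v z) = - (\<rho> w *v (\<rho> a *v z))"
  shows "positive_on (\<rho> w) T"
  unfolding positive_on_def
proof (intro ballI impI)
  fix m assume "m \<in> T" "m \<noteq> 0"
  have "\<rho> a *v m \<noteq> 0"
    using rho_square[of a m] \<open>m \<noteq> 0\<close> a(1) by auto
  then have "0 < h (\<rho> a *v m) (\<rho> w *v (\<rho> a *v m))"
    using pos maps[OF \<open>m \<in> T\<close>] unfolding positive_on_def by blast
  also have "h (\<rho> a *v m) (\<rho> w *v (\<rho> a *v m)) = complex_of_real (- Q a) * h m (\<rho> w *v m)"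
    by (simp add: rho_selfadjoint a(2) rho_square vector_scalar_commute h_minus h_scale)
  finally show "0 < h m (\<rho> w *v m)"
    using a(1) by (auto simp: less_complex_def mult_less_0_iff)
qed

lemma positive_on_chiral_plus_iff_minus:
  "positive_on (\<rho> w) chiral_plus \<longleftrightarrow> positive_on (\<rho> w) chiral_minus"
proof -
  obtain a where "Q a < 0" "\<And>z. \<rho> a *v (\<rho> w *v z) = - (\<rho> w *v (\<rho> a *v z))"
    using anticommuting_spacelike by blast
  then show ?thesis
    using positive_on_transfer rho_chiral_plus rho_chiral_minus by metis
qed

lemma krein_positive_imp_timelike:
  assumes "krein_positive h (\<rho> w)"
  shows "0 < Q w"
proof (rule ccontr)
  assume nonpos: "\<not> 0 < Q w"
  define \<psi> :: "complex^'m" where "\<psi> = vec 1"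
  have "\<psi> \<noteq> 0" by (simp add: \<psi>_def vec_eq_iff)
  with assms have c: "0 < h \<psi> (\<rho> w *v \<psi>)"
    unfolding krein_positive_def by (simp add: less_complex_def)
  have "\<rho> w *v \<psi> \<noteq> 0" using c by auto
  with assms have "0 < h (\<rho> w *v \<psi>) (\<rho> w *v (\<rho> w *v \<psi>))"
    unfolding krein_positive_def by (simp add: less_complex_def)
  also have "h (\<rho> w *v \<psi>) (\<rho> w *v (\<rho> w *v \<psi>)) = complex_of_real (Q w) * h \<psi> (\<rho> w *v \<psi>)"
    by (simp add: rho_square h_scale rho_selfadjoint)
  finally show False
    using c nonpos by (auto simp: less_complex_def zero_less_mult_iff)
qed

theorem krein_positive_chiral_iff_timelike:
  "krein_positive h (\<rho> u + \<Gamma> ** \<rho> v) \<longleftrightarrow>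
     (0 < Q (u + v) \<and> krein_positive h (\<rho> (u + v))) \<and> (0 < Q (u - v) \<and> krein_positive h (\<rho> (u - v)))"
  using krein_positive_chiral_iff krein_positive_rho_iff positive_on_chiral_plus_iff_minus
    krein_positive_imp_timelike by blast

end

theorem lemma8:
  fixes B :: "real^'n \<Rightarrow> real^'n \<Rightarrow> real"
    and \<rho> :: "real^'n \<Rightarrow> complex^'m^'m"
    and h :: "complex^'m \<Rightarrow> complex^'m \<Rightarrow> complex"
    and e :: "nat \<Rightarrow> real^'n"
    and u v :: "real^'n"
  assumes "even CARD('n)" and "CARD('n) > 2"
    and "anti_lorentz B"
    and "clifford_rep B \<rho>"
    and "nondeg_hermitian h"
    and "c_compatible h \<rho>"
    and "irreducible_rep \<rho>"
    and "pseudo_orthonormal_basis B e"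
  shows "krein_positive h (\<rho> u + chirality \<rho> e ** \<rho> v) \<longleftrightarrow>
         future_directed B h \<rho> (u + v) \<and> future_directed B h \<rho> (u - v)"
proof -
  have "symmetric_bilinear B"
    using assms(3) unfolding anti_lorentz_def by blast
  then interpret clifford_frame B \<rho> e
    using assms(4,8) by unfold_locales
  have spacelike: "\<exists>a. quad B a < 0 \<and> (\<forall>z. \<rho> a *v (\<rho> w *v z) = - (\<rho> w *v (\<rho> a *v z)))" for w
  proof -
    obtain a where "quad B a < 0" "B a w = 0"
      using anti_lorentz_orthogonal_spacelike[OF assms(3,2)] .
    then show ?thesis using rho_anticommute_orthogonal by blast
  qed
  interpret chiral_krein_space h \<rho> "chirality \<rho> e" "quad B"
  proof unfold_locales
    fix x y z :: "complex^'m" and c :: complex and w w' :: "real^'n"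
    show "h x (y + z) = h x y + h x z" "h x (c *s y) = c * h x y" "h y x = cnj (h x y)"
      using assms(5) unfolding nondeg_hermitian_def by blast+
    show "\<rho> (w + w') = \<rho> w + \<rho> w'"
      by (rule linear_add[OF rho_linear])
    show "\<rho> w *v (\<rho> w *v z) = complex_of_real (quad B w) *s z"
      by (rule rho_square)
    show "h (\<rho> w *v x) y = h x (\<rho> w *v y)"
      using assms(6) unfolding c_compatible_def by blast
    show "chirality \<rho> e *v (chirality \<rho> e *v z) = z"
      by (rule chirality_square[OF assms(3,1)])
    show "h (chirality \<rho> e *v x) y = - h x (chirality \<rho> e *v y)"
      by (rule chirality_skew[OF assms(5,6,1)])
    show "chirality \<rho> e *v (\<rho> w *v z) = - (\<rho> w *v (chirality \<rho> e *v z))"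
      by (rule chirality_anticommute[OF assms(1)])
    show "\<exists>a. quad B a < 0 \<and> (\<forall>z. \<rho> a *v (\<rho> w *v z) = - (\<rho> w *v (\<rho> a *v z)))"
      by (rule spacelike)
  qed
  show ?thesis
    unfolding future_directed_def timelike_def by (rule krein_positive_chiral_iff_timelike)
qed

end
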